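(* Fix an infinite-to-one map $f$ of $\mathbb{Z}$ onto $\mathbb{Z}$ and consider the blue backward Markov chain on columns described in the context. Let $n\ge1$ and let $(a(i,j))_{-n\le i,j\le n}$ be a fixed array of $0$s and $1$s. Then for every $\epsilon>0$ there exists $m$ such that for all integers $M>m$, $N>m$ and all doubly infinite $0$-$1$ sequences $(A(i))_{i\in\mathbb{Z}}$, $(B(i))_{i\in\mathbb{Z}}$, $$\Big|P\big(X(i,j)=a(i,j),\,-n\le i,j\le n \,\big|\, X(i,M)=A(i)\ \forall i\big)-P\big(X(i,j)=a(i,j),\,-n\le i,j\le n \,\big|\, X(i,N)=B(i)\ \forall i\big)\Big|<\epsilon .$$
   Context: Random variables $X(i,j)\in\{0,1\}$, $i,j\in\mathbb{Z}$; for each $j$, the $j$-th column is $(X(i,j))_{i\in\mathbb{Z}}$. Blue transition rule (the chain runs backwards in $j$): given the column $j+1$, the variables $X(i,j)$, $i\in\mathbb{Z}$, are conditionally independent (and independent of the columns $j+2,j+3,\dots$), and $X(i,j)$ equals $X(f(i),j+1)$ with probability $2/3$ and equals $1-X(f(i),j+1)$ with probability $1/3$. The conditional probability given column $M$ (resp. $N$) means: fix that column and generate columns $M-1,M-2,\dots$ (resp. $N-1,N-2,\dots$) successively by the blue transition rule. *)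

theory Defs
  imports "HOL-Probability.Probability"
begin

text \<open>0-1 values are modelled as booleans (True = 1, False = 0).
  The blue backward chain started from column M with values A is realised by
  independent flip variables E(i,j) (True = flip, probability 1/3):
  X(i,j) = X(f i, j+1) xor E(i,j) for j < M, and X(i,M) = A i.
  blueX f A M E k i is the value X(i, M - k).\<close>

fun blueX :: "(int \<Rightarrow> int) \<Rightarrow> (int \<Rightarrow> bool) \<Rightarrow> int \<Rightarrow> (int \<times> int \<Rightarrow> bool) \<Rightarrow> nat \<Rightarrow> int \<Rightarrow> bool" where
  "blueX f A M E 0 i = A i"
| "blueX f A M E (Suc k) i = (blueX f A M E k (f i) \<noteq> E (i, M - int (Suc k)))"

definition noise :: "(int \<times> int \<Rightarrow> bool) measure" where
  "noise = PiM UNIV (\<lambda>_. measure_pmf (bernoulli_pmf (1/3)))"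

definition blue_prob :: "(int \<Rightarrow> int) \<Rightarrow> int \<Rightarrow> (int \<Rightarrow> int \<Rightarrow> bool) \<Rightarrow> int \<Rightarrow> (int \<Rightarrow> bool) \<Rightarrow> real" where
  "blue_prob f n a M A = measure noise
     {E \<in> space noise. \<forall>i\<in>{-n..n}. \<forall>j\<in>{-n..n}. blueX f A M E (nat (M - j)) i = a i j}"

definition infinite_to_one_onto :: "(int \<Rightarrow> int) \<Rightarrow> bool" where
  "infinite_to_one_onto f \<longleftrightarrow> surj f \<and> (\<forall>y. infinite (f -` {y}))"

end

theory Submission
  imports Defs
begin

text \<open>The window event depends on finitely many flips and on the boundary column M only through
  at most (2n+1)^2 root positions. Conditioning on the flips C at these roots one column below,
  the probability from column M+1 is an average of probabilities from column M. Every flip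
  configuration on C has probability at least (1/3)^|C|, and flipping the roots where two
  boundaries differ shows that the plain sum over configurations is the same for both, so the
  oscillation over boundaries contracts by the factor 1 - (2/3)^((2n+1)^2) per column (Doeblin),
  while later columns stay in the band of earlier ones.\<close>

lemma sets_PiM_pmf_finite_type:
  fixes X :: "('a \<Rightarrow> 'b::finite) set"
  assumes fin: "finite D" and X: "X \<subseteq> PiE D (\<lambda>_. UNIV)"
  shows "X \<in> sets (PiM D (\<lambda>i. measure_pmf (p i)))"
proof -
  have "finite X"
    using X by (rule finite_subset) (intro finite_PiE fin, simp)
  have "X = (\<Union>g\<in>X. PiE D (\<lambda>i. {g i}))"
    using X by (auto simp: PiE_singleton PiE_iff subset_iff)
  also have "\<dots> \<in> sets (PiM D (\<lambda>i. measure_pmf (p i)))"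
    using \<open>finite X\<close> by (intro sets.finite_UN sets_PiM_I_finite fin) auto
  finally show ?thesis .
qed

lemma distr_restrict_Pi_pmf:
  assumes fin: "finite D"
  shows "distr (Pi_pmf D d p) (PiM D (\<lambda>i. measure_pmf (p i))) (\<lambda>x. restrict x D) =
         PiM D (\<lambda>i. measure_pmf (p i))"
proof (rule product_sigma_finite.PiM_eqI)
  interpret product_prob_space "\<lambda>i. measure_pmf (p i)" UNIV
    by (rule product_prob_spaceI) (simp add: measure_pmf.prob_space_axioms)
  show "product_sigma_finite (\<lambda>i. measure_pmf (p i))" ..
next
  fix A assume A: "\<And>i. i \<in> D \<Longrightarrow> A i \<in> sets (p i)"
  have "emeasure (distr (Pi_pmf D d p) (PiM D (\<lambda>i. measure_pmf (p i))) (\<lambda>x. restrict x D)) (PiE D A) =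
        emeasure (Pi_pmf D d p) ((\<lambda>x. restrict x D) -` PiE D A)"
    using A by (subst emeasure_distr) (auto intro!: sets_PiM_I_finite fin simp: space_PiM)
  also have "\<dots> = emeasure (Pi_pmf D d p) (PiE_dflt D d A)"
    by (intro emeasure_eq_AE AE_pmfI) (auto simp: PiE_dflt_def set_Pi_pmf fin)
  also have "\<dots> = (\<Prod>i\<in>D. emeasure (p i) (A i))"
    by (simp add: measure_pmf.emeasure_eq_measure measure_Pi_pmf_PiE_dflt fin prod_ennreal)
  finally show "emeasure (distr (Pi_pmf D d p) (PiM D (\<lambda>i. measure_pmf (p i))) (\<lambda>x. restrict x D)) (PiE D A) =
                (\<Prod>i\<in>D. emeasure (p i) (A i))" .
qed (use fin in auto)

lemma measure_PiM_pmf_eq_Pi_pmf: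
  fixes p :: "'b::finite pmf" and D :: "'a set"
  assumes fin: "finite D" and dep: "\<And>E. P E \<longleftrightarrow> P (\<lambda>x. if x \<in> D then E x else d)"
  shows "measure (PiM UNIV (\<lambda>_. measure_pmf p)) {E. P E} =
         measure_pmf.prob (Pi_pmf D d (\<lambda>_. p)) {E. P E}"
proof -
  let ?M = "\<lambda>_::'a. measure_pmf p"
  interpret product_prob_space ?M UNIV
    by (rule product_prob_spaceI) (simp add: measure_pmf.prob_space_axioms)
  define X where "X = {g \<in> PiE D (\<lambda>_. UNIV). P (\<lambda>x. if x \<in> D then g x else d)}"
  have dep': "P (\<lambda>x. if x \<in> D then restrict E D x else d) \<longleftrightarrow> P E" for E
    using dep[of E] by (simp cong: if_cong)
  have X: "X \<in> sets (PiM D ?M)"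
    unfolding X_def by (rule sets_PiM_pmf_finite_type[OF fin]) blast
  have "{E. P E} = prod_emb UNIV ?M D X"
    unfolding prod_emb_def X_def using dep' by (auto simp: space_PiM)
  then have "emeasure (PiM UNIV ?M) {E. P E} = emeasure (PiM D ?M) X"
    using emeasure_PiM_emb'[OF _ fin X] by simp
  also have "\<dots> = emeasure (Pi_pmf D d (\<lambda>_. p)) ((\<lambda>x. restrict x D) -` X)"
    using X by (subst distr_restrict_Pi_pmf[OF fin, symmetric, where d=d]) (simp add: emeasure_distr space_PiM)
  also have "(\<lambda>x. restrict x D) -` X = {E. P E}"
    unfolding X_def using dep' by auto
  finally show ?thesis
    by (simp add: measure_def)
qed

lemma measure_pair_pmf_eq_expectation:
  "measure_pmf.prob (pair_pmf P Q) S = measure_pmf.expectation P (\<lambda>x. measure_pmf.prob Q (Pair x -` S))"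
proof -
  have "emeasure (pair_pmf P Q) S = (\<integral>\<^sup>+x. \<integral>\<^sup>+y. indicator S (x, y) \<partial>Q \<partial>P)"
    by (simp add: nn_integral_pair_pmf'[symmetric])
  also have "\<dots> = (\<integral>\<^sup>+x. ennreal (measure_pmf.prob Q (Pair x -` S)) \<partial>P)"
    by (simp add: measure_pmf.emeasure_eq_measure[symmetric] indicator_def flip: nn_integral_indicator)
  also have "\<dots> = ennreal (measure_pmf.expectation P (\<lambda>x. measure_pmf.prob Q (Pair x -` S)))"
    by (intro nn_integral_eq_integral measure_pmf.integrable_const_bound[where B=1]) auto
  finally show ?thesis
    by (simp add: measure_pmf.emeasure_eq_measure integral_nonneg)
qed

definition window_event ::
    "(int \<Rightarrow> int) \<Rightarrow> int \<Rightarrow> (int \<Rightarrow> int \<Rightarrow> bool) \<Rightarrow> int \<Rightarrow> (int \<Rightarrow> bool) \<Rightarrow> (int \<times> int \<Rightarrow> bool) \<Rightarrow> bool" where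
  "window_event f n a M A E \<longleftrightarrow> (\<forall>i\<in>{-n..n}. \<forall>j\<in>{-n..n}. blueX f A M E (nat (M - j)) i = a i j)"

text \<open>The value at (i, j) is read off along the backward path i, f i, f (f i), ... up to
  column M: it uses the flips at the sites of this path and the boundary value at its root.\<close>

definition window_sites :: "(int \<Rightarrow> int) \<Rightarrow> int \<Rightarrow> int \<Rightarrow> (int \<times> int) set" where
  "window_sites f n M =
     (\<lambda>(i, j, t). ((f ^^ t) i, j + int t)) ` {(i, j, t). i \<in> {-n..n} \<and> j \<in> {-n..n} \<and> t < nat (M - j)}"

definition window_roots :: "(int \<Rightarrow> int) \<Rightarrow> int \<Rightarrow> int \<Rightarrow> int set" where
  "window_roots f n M = (\<lambda>(i, j). (f ^^ nat (M - j)) i) ` ({-n..n} \<times> {-n..n})"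

definition root_sites :: "(int \<Rightarrow> int) \<Rightarrow> int \<Rightarrow> int \<Rightarrow> (int \<times> int) set" where
  "root_sites f n M = (\<lambda>x. (x, M)) ` window_roots f n M"

definition step_column :: "(int \<Rightarrow> int) \<Rightarrow> (int \<times> int \<Rightarrow> bool) \<Rightarrow> int \<Rightarrow> (int \<Rightarrow> bool) \<Rightarrow> int \<Rightarrow> bool" where
  "step_column f E M A i \<longleftrightarrow> A (f i) \<noteq> E (i, M)"

lemma blueX_cong_noise:
  assumes "\<And>t. t < k \<Longrightarrow> E ((f ^^ t) i, M - int k + int t) = E' ((f ^^ t) i, M - int k + int t)"
  shows "blueX f A M E k i = blueX f A M E' k i"
  using assms
proof (induction k arbitrary: i)
  case (Suc k)
  have "blueX f A M E k (f i) = blueX f A M E' k (f i)"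
  proof (rule Suc.IH)
    fix t assume "t < k"
    then show "E ((f ^^ t) (f i), M - int k + int t) = E' ((f ^^ t) (f i), M - int k + int t)"
      using Suc.prems[of "Suc t"] by (simp add: funpow_swap1 algebra_simps)
  qed
  moreover have "E (i, M - int (Suc k)) = E' (i, M - int (Suc k))"
    using Suc.prems[of 0] by simp
  ultimately show ?case by simp
qed simp

lemma blueX_cong_boundary:
  "A ((f ^^ k) i) = A' ((f ^^ k) i) \<Longrightarrow> blueX f A M E k i = blueX f A' M E k i"
  by (induction k arbitrary: i) (simp_all add: funpow_swap1)

lemma blueX_Suc_step_column:
  "blueX f A (M + 1) E (Suc k) i = blueX f (step_column f E M A) M E k i"
  by (induction k arbitrary: i) (simp_all add: step_column_def algebra_simps)

lemma window_event_cong_noise: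
  assumes "\<And>x. x \<in> window_sites f n M \<Longrightarrow> E x = E' x"
  shows "window_event f n a M A E \<longleftrightarrow> window_event f n a M A E'"
proof -
  have "blueX f A M E (nat (M - j)) i = blueX f A M E' (nat (M - j)) i"
    if i: "i \<in> {-n..n}" and j: "j \<in> {-n..n}" for i j
  proof (rule blueX_cong_noise)
    fix t assume t: "t < nat (M - j)"
    then have "((f ^^ t) i, j + int t) \<in> window_sites f n M"
      unfolding window_sites_def using i j by (intro image_eqI[of _ _ "(i, j, t)"]) auto
    moreover have "M - int (nat (M - j)) + int t = j + int t"
      using t by simp
    ultimately show "E ((f ^^ t) i, M - int (nat (M - j)) + int t) = E' ((f ^^ t) i, M - int (nat (M - j)) + int t)"
      using assms by simp
  qed
  then show ?thesis
    unfolding window_event_def by simp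
qed

lemma window_event_cong_boundary:
  assumes "\<And>x. x \<in> window_roots f n M \<Longrightarrow> A x = A' x"
  shows "window_event f n a M A E \<longleftrightarrow> window_event f n a M A' E"
proof -
  have "blueX f A M E (nat (M - j)) i = blueX f A' M E (nat (M - j)) i"
    if "i \<in> {-n..n}" "j \<in> {-n..n}" for i j
  proof (rule blueX_cong_boundary, rule assms)
    show "(f ^^ nat (M - j)) i \<in> window_roots f n M"
      unfolding window_roots_def using that by (intro image_eqI[of _ _ "(i, j)"]) auto
  qed
  then show ?thesis
    unfolding window_event_def by simp
qed

lemma window_event_Suc:
  assumes "n \<le> M"
  shows "window_event f n a (M + 1) A E \<longleftrightarrow> window_event f n a M (step_column f E M A) E"
proof -
  have "blueX f A (M + 1) E (nat (M + 1 - j)) i = blueX f (step_column f E M A) M E (nat (M - j)) i"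
    if "j \<in> {-n..n}" for i j
  proof -
    have "nat (M + 1 - j) = Suc (nat (M - j))"
      using that assms by auto
    then show ?thesis
      by (simp only: blueX_Suc_step_column)
  qed
  then show ?thesis
    unfolding window_event_def by simp
qed

lemma finite_window_sites: "finite (window_sites f n M)"
proof -
  have "{(i, j, t). i \<in> {-n..n} \<and> j \<in> {-n..n} \<and> t < nat (M - j)} \<subseteq> {-n..n} \<times> {-n..n} \<times> {..<nat (M + n)}"
    by auto
  then show ?thesis
    unfolding window_sites_def by (intro finite_imageI) (rule finite_subset, auto)
qed

lemma window_sites_below: "x \<in> window_sites f n M \<Longrightarrow> snd x < M"
  by (auto simp: window_sites_def)

lemma finite_root_sites: "finite (root_sites f n M)"
  by (simp add: root_sites_def window_roots_def)

lemma card_root_sites_le: "card (root_sites f n M) \<le> nat (2 * n + 1) ^ 2"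
proof -
  have "card (root_sites f n M) \<le> card ({-n..n} \<times> {-n..n})"
    unfolding root_sites_def window_roots_def image_image
    by (rule card_image_le) simp
  also have "\<dots> = nat (2 * n + 1) ^ 2"
    by (simp add: card_cartesian_product power2_eq_square)
  finally show ?thesis .
qed

lemma blue_prob_eq_Pi_pmf:
  assumes "finite D" and "window_sites f n M \<subseteq> D"
  shows "blue_prob f n a M A =
         measure_pmf.prob (Pi_pmf D False (\<lambda>_. bernoulli_pmf (1/3))) {E. window_event f n a M A E}"
proof -
  have "space noise = UNIV"
    by (simp add: noise_def space_PiM)
  then have "blue_prob f n a M A = measure noise {E. window_event f n a M A E}"
    by (simp add: blue_prob_def window_event_def)
  also have "\<dots> = measure_pmf.prob (Pi_pmf D False (\<lambda>_. bernoulli_pmf (1/3))) {E. window_event f n a M A E}"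
    unfolding noise_def using assms
    by (intro measure_PiM_pmf_eq_Pi_pmf window_event_cong_noise) auto
  finally show ?thesis .
qed

lemma blue_prob_nonneg: "0 \<le> blue_prob f n a M A"
  and blue_prob_le_1: "blue_prob f n a M A \<le> 1"
  by (simp_all add: blue_prob_eq_Pi_pmf[OF finite_window_sites order_refl] measure_pmf.prob_le_1)

lemma blue_prob_cong_boundary:
  "(\<And>x. x \<in> window_roots f n M \<Longrightarrow> A x = A' x) \<Longrightarrow> blue_prob f n a M A = blue_prob f n a M A'"
  unfolding blue_prob_eq_Pi_pmf[OF finite_window_sites order_refl]
  using window_event_cong_boundary[of f n M A A'] by presburger

lemma window_sites_Suc_subset:
  assumes "n \<le> M"
  shows "window_sites f n (M + 1) \<subseteq> root_sites f n M \<union> window_sites f n M"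
proof
  fix x assume "x \<in> window_sites f n (M + 1)"
  then obtain i j t where ij: "i \<in> {-n..n}" "j \<in> {-n..n}" and t: "t < nat (M + 1 - j)"
    and x: "x = ((f ^^ t) i, j + int t)"
    by (auto simp: window_sites_def)
  show "x \<in> root_sites f n M \<union> window_sites f n M"
  proof (cases "t < nat (M - j)")
    case True
    then have "x \<in> window_sites f n M"
      unfolding x window_sites_def using ij by (intro image_eqI[of _ _ "(i, j, t)"]) auto
    then show ?thesis ..
  next
    case False
    with t assms ij have t_eq: "t = nat (M - j)" and "x = ((f ^^ t) i, M)"
      unfolding x by auto
    moreover have "(f ^^ t) i \<in> window_roots f n M"
      unfolding t_eq window_roots_def using ij by (intro image_eqI[of _ _ "(i, j)"]) auto
    ultimately have "x \<in> root_sites f n M"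
      unfolding root_sites_def by blast
    then show ?thesis ..
  qed
qed

lemma blue_prob_Suc_eq_expectation:
  assumes "n \<le> M"
  shows "blue_prob f n a (M + 1) A =
         measure_pmf.expectation (Pi_pmf (root_sites f n M) False (\<lambda>_. bernoulli_pmf (1/3)))
           (\<lambda>g. blue_prob f n a M (step_column f g M A))"
proof -
  define C where "C = root_sites f n M"
  define D where "D = window_sites f n M"
  define Q where "Q = (\<lambda>S. Pi_pmf S False (\<lambda>_::int \<times> int. bernoulli_pmf (1/3)))"
  define merge :: "(int \<times> int \<Rightarrow> bool) \<times> (int \<times> int \<Rightarrow> bool) \<Rightarrow> int \<times> int \<Rightarrow> bool"
    where "merge = (\<lambda>(g, e) x. if x \<in> C then g x else e x)"
  have fin: "finite C" "finite D"
    unfolding C_def D_def by (simp_all add: finite_root_sites finite_window_sites)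
  have disj: "C \<inter> D = {}"
    using window_sites_below by (fastforce simp: C_def D_def root_sites_def)
  have merge_event: "window_event f n a (M + 1) A (merge (g, e)) \<longleftrightarrow>
                     window_event f n a M (step_column f g M A) e" for g e
  proof -
    have "window_event f n a (M + 1) A (merge (g, e)) \<longleftrightarrow>
          window_event f n a M (step_column f (merge (g, e)) M A) (merge (g, e))"
      using assms by (rule window_event_Suc)
    also have "\<dots> \<longleftrightarrow> window_event f n a M (step_column f g M A) (merge (g, e))"
      by (rule window_event_cong_boundary) (auto simp: step_column_def merge_def C_def root_sites_def)
    also have "\<dots> \<longleftrightarrow> window_event f n a M (step_column f g M A) e"
      by (rule window_event_cong_noise) (use disj in \<open>auto simp: merge_def D_def\<close>)
    finally show ?thesis .
  qed
  have "blue_prob f n a (M + 1) A = measure_pmf.prob (Q (C \<union> D)) {E. window_event f n a (M + 1) A E}"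
    unfolding Q_def using fin window_sites_Suc_subset[OF assms]
    by (intro blue_prob_eq_Pi_pmf) (auto simp: C_def D_def)
  also have "Q (C \<union> D) = map_pmf merge (pair_pmf (Q C) (Q D))"
    unfolding Q_def merge_def by (rule Pi_pmf_union[OF fin disj])
  also have "measure_pmf.prob (map_pmf merge (pair_pmf (Q C) (Q D))) {E. window_event f n a (M + 1) A E} =
             measure_pmf.expectation (Q C) (\<lambda>g. measure_pmf.prob (Q D) {e. window_event f n a M (step_column f g M A) e})"
    by (simp add: measure_pair_pmf_eq_expectation vimage_def merge_event)
  also have "\<dots> = measure_pmf.expectation (Q C) (\<lambda>g. blue_prob f n a M (step_column f g M A))"
    unfolding Q_def D_def by (simp add: blue_prob_eq_Pi_pmf[OF finite_window_sites order_refl])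
  finally show ?thesis
    unfolding Q_def C_def .
qed

lemma abs_expectation_minus_le:
  fixes H :: "'a \<Rightarrow> real"
  assumes bound: "\<And>x. \<bar>H x - c\<bar> \<le> d"
  shows "\<bar>measure_pmf.expectation Q H - c\<bar> \<le> d"
proof -
  have "\<bar>H x\<bar> \<le> \<bar>c\<bar> + d" for x
    using bound[of x] by arith
  then have int: "integrable Q H"
    by (intro measure_pmf.integrable_const_bound[where B="\<bar>c\<bar> + d"]) auto
  have "measure_pmf.expectation Q H - c = measure_pmf.expectation Q (\<lambda>x. H x - c)"
    using int by (simp add: measure_pmf.prob_space)
  also have "\<bar>\<dots>\<bar> \<le> measure_pmf.expectation Q (\<lambda>x. \<bar>H x - c\<bar>)"
    by (rule integral_abs_bound)
  also have "\<dots> \<le> measure_pmf.expectation Q (\<lambda>_. d)"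
    using int bound by (intro integral_mono) auto
  finally show ?thesis
    by (simp add: measure_pmf.prob_space)
qed

text \<open>Doeblin's argument: every configuration has probability at least p^|C|, and the uniform
  part of this mass does not see the difference of H1 and H2 because their sums agree.\<close>

lemma expectation_Pi_pmf_bernoulli_diff_le:
  fixes C :: "'a set" and H1 H2 :: "('a \<Rightarrow> bool) \<Rightarrow> real"
  assumes fin: "finite C" and p: "0 \<le> p" "p \<le> 1/2"
    and bound: "\<And>g. \<bar>H1 g - H2 g\<bar> \<le> d"
    and same_sum: "(\<Sum>g\<in>PiE_dflt C False (\<lambda>_. UNIV). H1 g) = (\<Sum>g\<in>PiE_dflt C False (\<lambda>_. UNIV). H2 g)"
  shows "\<bar>measure_pmf.expectation (Pi_pmf C False (\<lambda>_. bernoulli_pmf p)) H1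
          - measure_pmf.expectation (Pi_pmf C False (\<lambda>_. bernoulli_pmf p)) H2\<bar>
         \<le> (1 - (2 * p) ^ card C) * d"
proof -
  define F where "F = PiE_dflt C False (\<lambda>_. UNIV :: bool set)"
  define Q where "Q = Pi_pmf C False (\<lambda>_. bernoulli_pmf p)"
  define u where "u = p ^ card C"
  have finF: "finite F"
    unfolding F_def using fin by auto
  have supp: "set_pmf Q \<subseteq> F"
    unfolding Q_def F_def using set_Pi_pmf_subset[OF fin, of False "\<lambda>_. bernoulli_pmf p"] by (auto simp: PiE_dflt_def)
  have expectation_eq: "measure_pmf.expectation Q H = (\<Sum>g\<in>F. pmf Q g * H g)" for H :: "_ \<Rightarrow> real"
    using integral_measure_pmf[OF finF, of Q H] supp by auto
  have u_le: "u \<le> pmf Q g" if "g \<in> F" for g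
  proof -
    have "u = (\<Prod>x\<in>C. p)"
      by (simp add: u_def)
    also have "\<dots> \<le> (\<Prod>x\<in>C. pmf (bernoulli_pmf p) (g x))"
    proof (intro prod_mono conjI)
      fix x show "p \<le> pmf (bernoulli_pmf p) (g x)"
        using p by (cases "g x") auto
    qed (use p in auto)
    also have "\<dots> = pmf Q g"
      unfolding Q_def using that fin by (subst pmf_Pi') (auto simp: F_def PiE_dflt_def)
    finally show ?thesis .
  qed
  have mass: "(\<Sum>g\<in>F. pmf Q g - u) = 1 - (2 * p) ^ card C"
    using sum_pmf_eq_1[OF finF supp] fin
    by (simp add: sum_subtractf F_def card_PiE_dflt u_def power_mult_distrib)
  have "measure_pmf.expectation Q H1 - measure_pmf.expectation Q H2 = (\<Sum>g\<in>F. pmf Q g * (H1 g - H2 g))"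
    by (simp add: expectation_eq sum_subtractf algebra_simps)
  also have "\<dots> = (\<Sum>g\<in>F. (pmf Q g - u) * (H1 g - H2 g)) + u * ((\<Sum>g\<in>F. H1 g) - (\<Sum>g\<in>F. H2 g))"
    by (simp add: algebra_simps sum.distrib sum_subtractf sum_distrib_left)
  also have "\<dots> = (\<Sum>g\<in>F. (pmf Q g - u) * (H1 g - H2 g))"
    using same_sum by (simp add: F_def)
  also have "\<bar>\<dots>\<bar> \<le> (\<Sum>g\<in>F. (pmf Q g - u) * d)"
    using u_le bound
    by (intro order_trans[OF sum_abs] sum_mono) (simp add: abs_mult mult_left_mono)
  also have "\<dots> = (1 - (2 * p) ^ card C) * d"
    by (simp add: sum_distrib_right[symmetric] mass)
  finally show ?thesis
    unfolding Q_def .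
qed

text \<open>Flipping the root sites x with A (f x) \<noteq> A' (f x) is an involution of the configurations
  that turns the boundary produced from A into the one produced from A'.\<close>

lemma sum_blue_prob_step_column_eq:
  "(\<Sum>g\<in>PiE_dflt (root_sites f n M) False (\<lambda>_. UNIV). blue_prob f n a M (step_column f g M A)) =
   (\<Sum>g\<in>PiE_dflt (root_sites f n M) False (\<lambda>_. UNIV). blue_prob f n a M (step_column f g M A'))"
proof -
  define flip where
    "flip = (\<lambda>g y. g y \<noteq> (y \<in> root_sites f n M \<and> A (f (fst y)) \<noteq> A' (f (fst y))))"
  have flip_flip: "flip (flip g) = g" for g
    unfolding flip_def by auto
  have flip_mem: "flip g \<in> PiE_dflt (root_sites f n M) False (\<lambda>_. UNIV)"
    if "g \<in> PiE_dflt (root_sites f n M) False (\<lambda>_. UNIV)" for g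
    using that unfolding flip_def PiE_dflt_def by auto
  have "blue_prob f n a M (step_column f (flip g) M A') = blue_prob f n a M (step_column f g M A)" for g
    by (rule blue_prob_cong_boundary) (auto simp: flip_def step_column_def root_sites_def)
  then show ?thesis
    by (intro sum.reindex_bij_witness[where i=flip and j=flip] flip_flip flip_mem)
qed

definition blue_rate :: "int \<Rightarrow> real" where
  "blue_rate n = 1 - (2/3) ^ nat (2 * n + 1) ^ 2"

lemma blue_rate_nonneg: "0 \<le> blue_rate n"
  and blue_rate_less_1: "blue_rate n < 1"
  unfolding blue_rate_def by (simp_all add: power_le_one)

lemma blue_prob_Suc_oscillation_le:
  assumes "n \<le> M" and osc: "\<And>B B'. \<bar>blue_prob f n a M B - blue_prob f n a M B'\<bar> \<le> d"
  shows "\<bar>blue_prob f n a (M + 1) A - blue_prob f n a (M + 1) A'\<bar> \<le> blue_rate n * d"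
proof -
  have "0 \<le> d"
    using osc[of A A] by simp
  have "\<bar>blue_prob f n a (M + 1) A - blue_prob f n a (M + 1) A'\<bar> \<le> (1 - (2 * (1/3)) ^ card (root_sites f n M)) * d"
    unfolding blue_prob_Suc_eq_expectation[OF assms(1)]
    by (rule expectation_Pi_pmf_bernoulli_diff_le[OF finite_root_sites _ _ osc sum_blue_prob_step_column_eq]) auto
  also have "\<dots> \<le> blue_rate n * d"
    unfolding blue_rate_def using \<open>0 \<le> d\<close> card_root_sites_le
    by (intro mult_right_mono diff_left_mono power_decreasing) auto
  finally show ?thesis .
qed

lemma blue_prob_Suc_within:
  assumes "n \<le> M" and "\<And>B. \<bar>blue_prob f n a M B - c\<bar> \<le> d"
  shows "\<bar>blue_prob f n a (M + 1) A - c\<bar> \<le> d"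
  unfolding blue_prob_Suc_eq_expectation[OF assms(1)] using assms(2) by (rule abs_expectation_minus_le)

lemma blue_prob_oscillation_le:
  "\<bar>blue_prob f n a (n + int k) B - blue_prob f n a (n + int k) B'\<bar> \<le> blue_rate n ^ k"
proof (induction k arbitrary: B B')
  case 0
  show ?case
    using blue_prob_nonneg[of f n a n B] blue_prob_le_1[of f n a n B]
      blue_prob_nonneg[of f n a n B'] blue_prob_le_1[of f n a n B'] by (simp add: abs_le_iff)
next
  case (Suc k)
  have "\<bar>blue_prob f n a (n + int k + 1) B - blue_prob f n a (n + int k + 1) B'\<bar> \<le> blue_rate n * blue_rate n ^ k"
    by (rule blue_prob_Suc_oscillation_le) (auto intro: Suc.IH)
  then show ?case
    by (simp add: ac_simps)
qed

lemma blue_prob_diff_le: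
  assumes "n + int k \<le> M" and "M \<le> N"
  shows "\<bar>blue_prob f n a N A - blue_prob f n a M B\<bar> \<le> blue_rate n ^ k"
proof -
  have "\<bar>blue_prob f n a (M + int l) A - blue_prob f n a M B\<bar> \<le> blue_rate n ^ nat (M - n)" for l A
  proof (induction l arbitrary: A)
    case 0
    show ?case
      using blue_prob_oscillation_le[of f n a "nat (M - n)"] assms(1) by simp
  next
    case (Suc l)
    have "\<bar>blue_prob f n a (M + int l + 1) A - blue_prob f n a M B\<bar> \<le> blue_rate n ^ nat (M - n)"
      by (rule blue_prob_Suc_within) (use assms(1) Suc.IH in auto)
    then show ?case
      by (simp add: ac_simps)
  qed
  from this[of "nat (N - M)"] have "\<bar>blue_prob f n a N A - blue_prob f n a M B\<bar> \<le> blue_rate n ^ nat (M - n)"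
    using assms(2) by simp
  also have "\<dots> \<le> blue_rate n ^ k"
    using assms(1) blue_rate_nonneg[of n] blue_rate_less_1[of n] by (intro power_decreasing) auto
  finally show ?thesis .
qed

theorem mainTheorem11:
  fixes f :: "int \<Rightarrow> int" and n :: int and a :: "int \<Rightarrow> int \<Rightarrow> bool"
  assumes "infinite_to_one_onto f" and "n \<ge> 1"
  shows "\<forall>\<epsilon>::real. \<epsilon> > 0 \<longrightarrow> (\<exists>m::int. \<forall>M N. M > m \<longrightarrow> N > m \<longrightarrow>
           (\<forall>A B :: int \<Rightarrow> bool. \<bar>blue_prob f n a M A - blue_prob f n a N B\<bar> < \<epsilon>))"
proof (intro allI impI)
  fix \<epsilon> :: real assume "\<epsilon> > 0"
  then obtain k where k: "blue_rate n ^ k < \<epsilon>"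
    using real_arch_pow_inv blue_rate_less_1 by blast
  have "\<bar>blue_prob f n a M A - blue_prob f n a N B\<bar> < \<epsilon>"
    if "n + int k < M" "n + int k < N" for M N A B
  proof (cases "M \<le> N")
    case True
    then show ?thesis
      using that blue_prob_diff_le[of n k M N f a B A] k by (simp add: abs_minus_commute)
  next
    case False
    then show ?thesis
      using that blue_prob_diff_le[of n k N M f a A B] k by simp
  qed
  then show "\<exists>m. \<forall>M N. M > m \<longrightarrow> N > m \<longrightarrow>
               (\<forall>A B. \<bar>blue_prob f n a M A - blue_prob f n a N B\<bar> < \<epsilon>)"
    by blast
qed

end
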